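(* Let $\mathcal O$ be the suboperad of $\mathrm{CNCB}$ generated by $p:=T_{bbu}$ and $r:=T_{ubu}$. Then $\mathcal O$ admits the presentation with generators $p,r$ of arity $2$ and relations $$r\circ_1 r=r\circ_2 r,\qquad r\circ_1 p=p\circ_2 r.$$ That is, $\mathcal O$ is isomorphic, via the morphism sending the generators to $p$ and $r$, to the quotient of the free operad on two binary generators by the operadic congruence generated by these relations.
   Context: For $n\ge2$, a bicoloured noncrossing configuration (BNC) of size $n$ is a regular polygon with vertices $1,\dots,n+1$ clockwise, together with disjoint sets of blue and red arcs among the arcs $(i,j)$, $1\le i<j\le n+1$. The arcs $(i,i+1)$ are the edges ($i$th edge), $(1,n+1)$ is the base, and the others are diagonals. Coloured arcs are pairwise noncrossing ($(i,j),(k,l)$ cross iff $i<k<j<l$ or $k<i<l<j$), and red arcs are diagonals. There is one BNC of size $1$, a blue segment, which is the unit. The operad $\mathrm{CNCB}$ has the BNCs as elements (arity = size). Its composition $\mathfrak C\circ_i\mathfrak D$ ($\mathfrak C$ of size $n$, $\mathfrak D$ of size $m$) glues the base of $\mathfrak D$ on the $i$th edge of $\mathfrak C$. Arcs $(a,b)$ of $\mathfrak C$ become $(\sigma(a),\sigma(b))$ with $\sigma(v)=v$ for $v\le i$ and $v+m-1$ otherwise, and arcs $(a,b)$ of $\mathfrak D$ become $(a+i-1,b+i-1)$, keeping colours. The exception is the arc $(i,i+m)$, which is red if the $i$th edge of $\mathfrak C$ and the base of $\mathfrak D$ are both uncoloured, blue if both are blue, and uncoloured otherwise. For $x,y,z\in\{b,u\}$,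 $T_{xyz}$ denotes the BNC of size $2$ (a triangle with vertices $1,2,3$) whose first edge $(1,2)$ has colour $x$, whose base $(1,3)$ has colour $y$, and whose second edge $(2,3)$ has colour $z$, where $b$ = blue and $u$ = uncoloured. The suboperad generated by a set is the smallest suboperad containing it. *)

theory Defs
  imports Main
begin

text \<open>A BNC is represented as a triple (n, B, R): its size n, its set of blue arcs B
and its set of red arcs R; arcs are pairs (i,j) with 1 <= i < j <= n+1 (vertices 1..n+1).\<close>

type_synonym arc = "nat \<times> nat"
type_synonym bnc = "nat \<times> arc set \<times> arc set"

definition bnc_size :: "bnc \<Rightarrow> nat" where
  "bnc_size C = fst C"

definition bnc_blue :: "bnc \<Rightarrow> arc set" where
  "bnc_blue C = fst (snd C)"

definition bnc_red :: "bnc \<Rightarrow> arc set" where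
  "bnc_red C = snd (snd C)"

definition arcs_cross :: "arc \<Rightarrow> arc \<Rightarrow> bool" where
  "arcs_cross a b = (let (i,j) = a; (k,l) = b in (i < k \<and> k < j \<and> j < l) \<or> (k < i \<and> i < l \<and> l < j))"

text \<open>Well-formedness (for reference; every element generated below is well-formed).\<close>
definition bnc_wf :: "bnc \<Rightarrow> bool" where
  "bnc_wf C = (let n = bnc_size C; B = bnc_blue C; R = bnc_red C in
     n \<ge> 1 \<and> B \<inter> R = {} \<and>
     (\<forall>(i,j) \<in> B \<union> R. 1 \<le> i \<and> i < j \<and> j \<le> n + 1) \<and>
     (\<forall>a \<in> B \<union> R. \<forall>b \<in> B \<union> R. \<not> arcs_cross a b) \<and>
     (\<forall>(i,j) \<in> R. j \<noteq> i + 1 \<and> (i,j) \<noteq> (1, n + 1)) \<and>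
     (n = 1 \<longrightarrow> B = {(1,2)} \<and> R = {}))"

definition bnc_unit :: bnc where
  "bnc_unit = (1, {(1,2)}, {})"

text \<open>Partial composition C o_i D of CNCB (meaningful for 1 <= i <= size C).\<close>
definition bnc_comp :: "bnc \<Rightarrow> nat \<Rightarrow> bnc \<Rightarrow> bnc" where
  "bnc_comp C i D =
    (let n = bnc_size C; m = bnc_size D;
         \<sigma> = (\<lambda>v. if v \<le> i then v else v + m - 1);
         relC = (\<lambda>(a,b). (\<sigma> a, \<sigma> b));
         sh = (\<lambda>(a,b). (a + i - 1, b + i - 1));
         e = (i, i + m);
         edge_blue = ((i, i+1) \<in> bnc_blue C);
         edge_unc = ((i, i+1) \<notin> bnc_blue C \<and> (i, i+1) \<notin> bnc_red C);
         base_blue = ((1, m+1) \<in> bnc_blue D);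
         base_unc = ((1, m+1) \<notin> bnc_blue D \<and> (1, m+1) \<notin> bnc_red D);
         B = (relC ` bnc_blue C \<union> sh ` bnc_blue D) - {e};
         R = (relC ` bnc_red C \<union> sh ` bnc_red D) - {e}
     in (n + m - 1,
         B \<union> (if edge_blue \<and> base_blue then {e} else {}),
         R \<union> (if edge_unc \<and> base_unc then {e} else {})))"

text \<open>Triangles T_xyz: first edge (1,2) colour x, base (1,3) colour y, second edge (2,3) colour z.\<close>
definition T_bbu :: bnc where
  "T_bbu = (2, {(1,2), (1,3)}, {})"

definition T_ubu :: bnc where
  "T_ubu = (2, {(1,3)}, {})"

inductive_set suboperad_gen :: "bnc set \<Rightarrow> bnc set" for G :: "bnc set" where
  unit: "bnc_unit \<in> suboperad_gen G"
| gen: "g \<in> G \<Longrightarrow> g \<in> suboperad_gen G"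
| comp: "x \<in> suboperad_gen G \<Longrightarrow> y \<in> suboperad_gen G \<Longrightarrow> 1 \<le> i \<Longrightarrow> i \<le> bnc_size x
          \<Longrightarrow> bnc_comp x i y \<in> suboperad_gen G"

datatype gen2 = GP | GR

text \<open>Elements of the free operad: planar binary trees with internal nodes labelled by generators;
leaves are the inputs, numbered from left to right.\<close>
datatype ftree = Leaf | Node gen2 ftree ftree

fun farity :: "ftree \<Rightarrow> nat" where
  "farity Leaf = 1"
| "farity (Node g l r) = farity l + farity r"

fun fcomp :: "ftree \<Rightarrow> nat \<Rightarrow> ftree \<Rightarrow> ftree" where
  "fcomp Leaf i s = s"
| "fcomp (Node g l r) i s =
     (if i \<le> farity l then Node g (fcomp l i s) r else Node g l (fcomp r (i - farity l) s))"

abbreviation fgen :: "gen2 \<Rightarrow> ftree" where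
  "fgen g \<equiv> Node g Leaf Leaf"

inductive fcong :: "ftree \<Rightarrow> ftree \<Rightarrow> bool" where
  rel_rr: "fcong (fcomp (fgen GR) 1 (fgen GR)) (fcomp (fgen GR) 2 (fgen GR))"
| rel_rp: "fcong (fcomp (fgen GR) 1 (fgen GP)) (fcomp (fgen GP) 2 (fgen GR))"
| refl: "fcong t t"
| sym: "fcong t t' \<Longrightarrow> fcong t' t"
| trans: "fcong t t' \<Longrightarrow> fcong t' t'' \<Longrightarrow> fcong t t''"
| comp_left: "fcong t t' \<Longrightarrow> 1 \<le> i \<Longrightarrow> i \<le> farity t \<Longrightarrow> fcong (fcomp t i s) (fcomp t' i s)"
| comp_right: "fcong s s' \<Longrightarrow> 1 \<le> i \<Longrightarrow> i \<le> farity t \<Longrightarrow> fcong (fcomp t i s) (fcomp t i s')"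

text \<open>The operad morphism from the free operad to CNCB sending GP to p = T_bbu and GR to r = T_ubu
(uniquely determined: a node g(l,r) is (g o_2 r) o_1 l).\<close>
fun gen_val :: "gen2 \<Rightarrow> bnc" where
  "gen_val GP = T_bbu"
| "gen_val GR = T_ubu"

fun feval :: "ftree \<Rightarrow> bnc" where
  "feval Leaf = bnc_unit"
| "feval (Node g l r) = bnc_comp (bnc_comp (gen_val g) 2 (feval r)) 1 (feval l)"

end

theory Submission
  imports Defs
begin

text \<open>
  Every tree evaluates to a configuration without red arcs whose base is blue, and whose
  other blue arcs are read off the tree: each p-node contributes the arc spanning the leaves
  of its left subtree. Grafting trees corresponds to composing configurations, which gives
  the image; both relations relate trees with the same arcs, which gives soundness.
  For completeness, the relations rewrite g(a, r(b, c)) to r(g(a, b), c), so every tree is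
  congruent to one in which no right child is an r-node. Such a normal tree is recovered
  from its arcs: its root is p iff the blue arcs connect its first vertex to its last one,
  and no blue arc leaves the leaves of the left subtree of an r-root, which locates the
  split point.
\<close>

lemma farity_ge_1: "1 \<le> farity t"
  by (induction t) auto

lemma farity_fcomp:
  "1 \<le> i \<Longrightarrow> i \<le> farity t \<Longrightarrow> farity (fcomp t i u) = farity t + farity u - 1"
  by (induction t arbitrary: i) (auto simp: farity_ge_1)

text \<open>The non-base blue arcs of the configuration of a tree whose leftmost vertex is \<open>s\<close>.\<close>

fun blue_arcs :: "ftree \<Rightarrow> nat \<Rightarrow> arc set" where
  "blue_arcs Leaf s = {}"
| "blue_arcs (Node GP a b) s = insert (s, s + farity a) (blue_arcs a s \<union> blue_arcs b (s + farity a))"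
| "blue_arcs (Node GR a b) s = blue_arcs a s \<union> blue_arcs b (s + farity a)"

lemma blue_arcs_bounds: "(x, y) \<in> blue_arcs t s \<Longrightarrow> s \<le> x \<and> x < y \<and> y < s + farity t"
proof (induction t arbitrary: s)
  case (Node g a b)
  then show ?case
    using farity_ge_1 [of a] farity_ge_1 [of b] by (cases g) fastforce+
qed simp

lemma blue_arcs_shift: "map_prod (\<lambda>v. v + d) (\<lambda>v. v + d) ` blue_arcs t s = blue_arcs t (s + d)"
proof (induction t arbitrary: s)
  case (Node g a b)
  then show ?case by (cases g) (simp_all add: image_Un ac_simps)
qed simp

text \<open>The vertex relabelling \<open>\<sigma>\<close> of \<open>bnc_comp\<close> when grafting \<open>m\<close> inputs after vertex \<open>c\<close>.\<close>

definition graft_relabel :: "nat \<Rightarrow> nat \<Rightarrow> nat \<Rightarrow> nat" where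
  "graft_relabel c m v = (if v \<le> c then v else v + m - 1)"

abbreviation relabel_arcs :: "nat \<Rightarrow> nat \<Rightarrow> arc set \<Rightarrow> arc set" where
  "relabel_arcs c m \<equiv> image (map_prod (graft_relabel c m) (graft_relabel c m))"

lemma relabel_blue_arcs_below:
  assumes "s + farity t \<le> c + 1"
  shows "relabel_arcs c m (blue_arcs t s) = blue_arcs t s"
proof -
  have "map_prod (graft_relabel c m) (graft_relabel c m) z = z" if "z \<in> blue_arcs t s" for z
    using that assms by (cases z) (auto simp: graft_relabel_def dest: blue_arcs_bounds)
  then show ?thesis by simp
qed

lemma relabel_blue_arcs_above:
  assumes "c < s" "1 \<le> m"
  shows "relabel_arcs c m (blue_arcs t s) = blue_arcs t (s + (m - 1))"
proof -
  have "relabel_arcs c m (blue_arcs t s) = map_prod (\<lambda>v. v + (m - 1)) (\<lambda>v. v + (m - 1)) ` blue_arcs t s"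
    using assms by (intro image_cong) (auto simp: graft_relabel_def dest: blue_arcs_bounds)
  then show ?thesis by (simp add: blue_arcs_shift)
qed

lemma blue_arcs_fcomp:
  assumes "1 \<le> i" "i \<le> farity t"
  shows "blue_arcs (fcomp t i u) s
           = relabel_arcs (s + i - 1) (farity u) (blue_arcs t s) \<union> blue_arcs u (s + i - 1)"
  using assms
proof (induction t arbitrary: i s)
  case (Node g a b)
  have pos: "1 \<le> farity a" "1 \<le> farity b" "1 \<le> farity u" by (rule farity_ge_1)+
  let ?rel = "graft_relabel (s + i - 1) (farity u)"
  show ?case
  proof (cases "i \<le> farity a")
    case True
    have "blue_arcs (fcomp a i u) s = relabel_arcs (s + i - 1) (farity u) (blue_arcs a s) \<union> blue_arcs u (s + i - 1)"
      using Node.IH(1) Node.prems True by simp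
    moreover have "relabel_arcs (s + i - 1) (farity u) (blue_arcs b (s + farity a))
                     = blue_arcs b (s + (farity a + farity u - 1))"
    proof -
      have "s + farity a + (farity u - 1) = s + (farity a + farity u - 1)" using pos by simp
      then show ?thesis
        using relabel_blue_arcs_above [of "s + i - 1" "s + farity a" "farity u" b] True pos by simp
    qed
    moreover have "?rel s = s" "?rel (s + farity a) = s + (farity a + farity u - 1)"
      using True pos Node.prems by (auto simp: graft_relabel_def)
    ultimately show ?thesis
      using True farity_fcomp [of i a u] Node.prems by (cases g) (auto simp: image_Un)
  next
    case False
    have "blue_arcs (fcomp b (i - farity a) u) (s + farity a)
            = relabel_arcs (s + i - 1) (farity u) (blue_arcs b (s + farity a)) \<union> blue_arcs u (s + i - 1)"
      using Node.IH(2) [of "i - farity a" "s + farity a"] Node.prems False pos by simp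
    moreover have "relabel_arcs (s + i - 1) (farity u) (blue_arcs a s) = blue_arcs a s"
      using relabel_blue_arcs_below False by simp
    moreover have "?rel s = s" "?rel (s + farity a) = s + farity a"
      using False pos Node.prems by (auto simp: graft_relabel_def)
    ultimately show ?thesis
      using False by (cases g) (auto simp: image_Un)
  qed
qed simp

definition config :: "ftree \<Rightarrow> bnc" where
  "config t = (farity t, insert (1, farity t + 1) (blue_arcs t 1), {})"

lemma bnc_size_config [simp]: "bnc_size (config t) = farity t"
  by (simp add: config_def bnc_size_def)

lemma bnc_comp_red_free:
  assumes "(1, m + 1) \<in> BD"
  shows "bnc_comp (n, BC, {}) i (m, BD, {})
           = (n + m - 1,
              (relabel_arcs i m BC \<union> map_prod (\<lambda>v. v + i - 1) (\<lambda>v. v + i - 1) ` BD - {(i, i + m)})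
                \<union> (if (i, i + 1) \<in> BC then {(i, i + m)} else {}),
              {})"
  using assms
  by (simp add: bnc_comp_def Let_def bnc_size_def bnc_blue_def bnc_red_def graft_relabel_def map_prod_def)

lemma bnc_comp_config:
  assumes "1 \<le> i" "i \<le> farity t"
  shows "bnc_comp (config t) i (config u) = config (fcomp t i u)"
proof (cases t)
  case Leaf
  then show ?thesis
    using assms by (simp add: config_def bnc_comp_red_free graft_relabel_def insert_absorb)
next
  case (Node g a b)
  define n m where "n = farity t" and "m = farity u"
  have n2: "2 \<le> n" using Node farity_ge_1 [of a] farity_ge_1 [of b] by (simp add: n_def)
  have m1: "1 \<le> m" using farity_ge_1 [of u] by (simp add: m_def)
  have new_arc_outside: "(i, i + m) \<notin> blue_arcs u i" "(i, i + m) \<noteq> (1, n + m)"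
    using blue_arcs_bounds [of i "i + m" u i] n2 assms by (auto simp: m_def n_def)
  have base: "relabel_arcs i m (insert (1, n + 1) (blue_arcs t 1))
                = insert (1, n + m) (relabel_arcs i m (blue_arcs t 1))"
    using assms n2 m1 by (simp add: graft_relabel_def n_def)
  have shifted: "map_prod (\<lambda>v. v + i - 1) (\<lambda>v. v + i - 1) ` insert (1, m + 1) (blue_arcs u 1)
                   = insert (i, i + m) (blue_arcs u i)"
    using blue_arcs_shift [of "i - 1" u 1] assms by (simp add: m_def add.commute)
  have edge: "(i, i + 1) \<in> insert (1, n + 1) (blue_arcs t 1) \<longleftrightarrow> (i, i + 1) \<in> blue_arcs t 1"
    using n2 by auto
  have glued: "(i, i + m) \<in> relabel_arcs i m (blue_arcs t 1) \<longleftrightarrow> (i, i + 1) \<in> blue_arcs t 1"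
  proof
    assume "(i, i + m) \<in> relabel_arcs i m (blue_arcs t 1)"
    then obtain x y where xy: "(x, y) \<in> blue_arcs t 1" "graft_relabel i m x = i" "graft_relabel i m y = i + m"
      by auto
    then have "x = i" "y = i + 1"
      using blue_arcs_bounds [OF xy(1)] m1 by (auto simp: graft_relabel_def split: if_splits)
    then show "(i, i + 1) \<in> blue_arcs t 1" using xy(1) by simp
  next
    assume "(i, i + 1) \<in> blue_arcs t 1"
    then have "map_prod (graft_relabel i m) (graft_relabel i m) (i, i + 1) \<in> relabel_arcs i m (blue_arcs t 1)"
      by blast
    then show "(i, i + m) \<in> relabel_arcs i m (blue_arcs t 1)" using m1 by (simp add: graft_relabel_def)
  qed
  have config_t: "config t = (n, insert (1, n + 1) (blue_arcs t 1), {})"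
    and config_u: "config u = (m, insert (1, m + 1) (blue_arcs u 1), {})"
    by (simp_all add: config_def n_def m_def)
  show ?thesis
    unfolding config_t config_u bnc_comp_red_free [of m "insert (1, m + 1) (blue_arcs u 1)", OF insertI1] base shifted edge
    using blue_arcs_fcomp [OF assms, of u 1] farity_fcomp [OF assms, of u] new_arc_outside glued n2 m1
    by (auto simp: config_def m_def n_def)
qed

lemma gen_val_config: "gen_val g = config (fgen g)"
  by (cases g) (auto simp: config_def T_bbu_def T_ubu_def)

lemma feval_eq_config: "feval t = config t"
proof (induction t)
  case Leaf
  then show ?case by (simp add: config_def bnc_unit_def)
next
  case (Node g a b)
  have "bnc_comp (config (fgen g)) 2 (config b) = config (Node g Leaf b)"
    by (subst bnc_comp_config) auto
  moreover have "bnc_comp (config (Node g Leaf b)) 1 (config a) = config (Node g a b)"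
    by (subst bnc_comp_config) (auto simp: farity_ge_1)
  ultimately show ?case
    using Node by (simp add: gen_val_config)
qed

lemma range_feval: "range feval = suboperad_gen {T_bbu, T_ubu}"
proof (intro equalityI subsetI)
  fix x
  assume "x \<in> range feval"
  then obtain t where "x = feval t" by auto
  moreover have "feval t \<in> suboperad_gen {T_bbu, T_ubu}"
  proof (induction t)
    case Leaf
    then show ?case by (simp add: suboperad_gen.unit)
  next
    case (Node g a b)
    have "gen_val g \<in> suboperad_gen {T_bbu, T_ubu}"
      by (cases g) (auto intro: suboperad_gen.gen)
    then have "bnc_comp (gen_val g) 2 (feval b) \<in> suboperad_gen {T_bbu, T_ubu}"
      using Node.IH(2) by (rule suboperad_gen.comp) (simp_all add: gen_val_config)
    moreover have "1 \<le> bnc_size (bnc_comp (gen_val g) 2 (feval b))"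
      by (simp add: gen_val_config feval_eq_config bnc_comp_config farity_ge_1)
    ultimately show ?case
      using Node.IH(1) by (simp add: suboperad_gen.comp)
  qed
  ultimately show "x \<in> suboperad_gen {T_bbu, T_ubu}" by simp
next
  fix x
  assume "x \<in> suboperad_gen {T_bbu, T_ubu}"
  then show "x \<in> range feval"
  proof (induction rule: suboperad_gen.induct)
    case unit
    show ?case using feval.simps(1) by (metis rangeI)
  next
    case (gen g)
    then show ?case using gen_val.simps by (metis feval_eq_config gen_val_config insertE singletonD rangeI)
  next
    case (comp x y i)
    then obtain t u where "x = feval t" "y = feval u" by auto
    with comp have "bnc_comp x i y = feval (fcomp t i u)"
      by (simp add: feval_eq_config bnc_comp_config)
    then show ?case by simp
  qed
qed

lemma fcong_imp_config_eq: "fcong t t' \<Longrightarrow> config t = config t'"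
proof (induction rule: fcong.induct)
  case rel_rr
  then show ?case by (simp add: config_def insert_commute)
next
  case rel_rp
  then show ?case by (simp add: config_def insert_commute)
next
  case (comp_left t t' i s)
  then have "farity t = farity t'" by (simp add: config_def)
  with comp_left show ?case by (simp add: bnc_comp_config [symmetric])
next
  case (comp_right s s' i t)
  then show ?case by (simp add: bnc_comp_config [symmetric])
qed simp_all

fun r_rooted :: "ftree \<Rightarrow> bool" where
  "r_rooted (Node GR a b) = True"
| "r_rooted _ = False"

fun right_normal :: "ftree \<Rightarrow> bool" where
  "right_normal Leaf = True"
| "right_normal (Node g a b) = (right_normal a \<and> right_normal b \<and> \<not> r_rooted b)"

fun normal_node :: "gen2 \<Rightarrow> ftree \<Rightarrow> ftree \<Rightarrow> ftree" where
  "normal_node g a (Node GR b c) = Node GR (normal_node g a b) c"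
| "normal_node g a b = Node g a b"

fun normalize :: "ftree \<Rightarrow> ftree" where
  "normalize Leaf = Leaf"
| "normalize (Node g a b) = normal_node g (normalize a) (normalize b)"

lemma right_normal_normal_node:
  "right_normal a \<Longrightarrow> right_normal b \<Longrightarrow> right_normal (normal_node g a b)"
  by (induction g a b rule: normal_node.induct) auto

lemma right_normal_normalize: "right_normal (normalize t)"
  by (induction t) (auto intro: right_normal_normal_node)

lemma fcong_Node: "fcong a a' \<Longrightarrow> fcong b b' \<Longrightarrow> fcong (Node g a b) (Node g a' b')"
proof -
  assume a: "fcong a a'" and b: "fcong b b'"
  have "fcong (Node g Leaf b) (Node g Leaf b')"
    using fcong.comp_right [OF b, of 2 "fgen g"] by simp
  from fcong.comp_left [OF this, of 1 a] have "fcong (Node g a b) (Node g a b')"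
    by simp
  moreover have "fcong (Node g a b') (Node g a' b')"
    using fcong.comp_right [OF a, of 1 "Node g Leaf b'"] by (simp add: farity_ge_1)
  ultimately show ?thesis by (rule fcong.trans)
qed

lemma fcong_substitute3:
  assumes "fcong x y" "farity x = 3"
  shows "fcong (fcomp (fcomp (fcomp x 3 c) 2 b) 1 a) (fcomp (fcomp (fcomp y 3 c) 2 b) 1 a)"
proof -
  have "fcong (fcomp x 3 c) (fcomp y 3 c)"
    using fcong.comp_left [OF assms(1)] assms(2) by simp
  moreover have "3 \<le> farity (fcomp x 3 c)"
    using farity_fcomp [of 3 x c] assms(2) farity_ge_1 [of c] by simp
  ultimately have "fcong (fcomp (fcomp x 3 c) 2 b) (fcomp (fcomp y 3 c) 2 b)"
    using fcong.comp_left by simp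
  then show ?thesis
    using fcong.comp_left farity_ge_1 by blast
qed

text \<open>For both generators \<open>g\<close>, \<open>g \<circ>\<^sub>2 r = r \<circ>\<^sub>1 g\<close> is one of the defining relations.\<close>

lemma fcong_rotate: "fcong (Node g a (Node GR b c)) (Node GR (Node g a b) c)"
proof -
  have "fcong (fcomp (fgen g) 2 (fgen GR)) (fcomp (fgen GR) 1 (fgen g))"
    using fcong.sym [OF fcong.rel_rr] fcong.sym [OF fcong.rel_rp] by (cases g) simp_all
  from fcong_substitute3 [OF this, of c b a] show ?thesis
    by (simp add: farity_ge_1)
qed

lemma fcong_normal_node: "fcong (Node g a b) (normal_node g a b)"
proof (induction g a b rule: normal_node.induct)
  case (1 g a b c)
  then have "fcong (Node GR (Node g a b) c) (Node GR (normal_node g a b) c)"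
    by (intro fcong_Node fcong.refl)
  then show ?case
    using fcong.trans [OF fcong_rotate] by simp
qed (simp_all add: fcong.refl)

lemma fcong_normalize: "fcong t (normalize t)"
proof (induction t)
  case Leaf
  then show ?case by (simp add: fcong.refl)
next
  case (Node g a b)
  then show ?case
    using fcong.trans [OF fcong_Node fcong_normal_node] by simp
qed

lemma blue_arcs_Node_left: "blue_arcs a s = {(x, y) \<in> blue_arcs (Node g a b) s. y < s + farity a}"
  using blue_arcs_bounds [of _ _ a s] blue_arcs_bounds [of _ _ b "s + farity a"]
  by (cases g) fastforce+

lemma blue_arcs_Node_right:
  "blue_arcs b (s + farity a) = {(x, y) \<in> blue_arcs (Node g a b) s. s + farity a \<le> x}"
  using blue_arcs_bounds [of _ _ a s] blue_arcs_bounds [of _ _ b "s + farity a"] farity_ge_1 [of a]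
  by (cases g) fastforce+

lemma blue_arcs_Node_first_vertex: "(s, y) \<in> blue_arcs (Node g a b) s \<Longrightarrow> y \<le> s + farity a"
  using blue_arcs_bounds [of _ _ a s] blue_arcs_bounds [of _ _ b "s + farity a"] farity_ge_1 [of a]
  by (cases g) fastforce+

lemma right_normal_connects_ends:
  "right_normal t \<Longrightarrow> \<not> r_rooted t \<Longrightarrow> (s, s + farity t - 1) \<in> (blue_arcs t s)\<^sup>*"
proof (induction t arbitrary: s)
  case (Node g a b)
  then have g: "g = GP" by (cases g) auto
  have "(s + farity a, s + farity a + farity b - 1) \<in> (blue_arcs b (s + farity a))\<^sup>*"
    using Node.IH(2) Node.prems by simp
  moreover have "blue_arcs b (s + farity a) \<subseteq> blue_arcs (Node g a b) s" using g by auto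
  ultimately have "(s + farity a, s + farity a + farity b - 1) \<in> (blue_arcs (Node g a b) s)\<^sup>*"
    using rtrancl_mono by blast
  moreover have "(s, s + farity a) \<in> blue_arcs (Node g a b) s" using g by simp
  ultimately show ?case
    by (simp add: converse_rtrancl_into_rtrancl add.assoc)
qed simp

lemma blue_arcs_GR_no_crossing:
  assumes "(v, w) \<in> (blue_arcs (Node GR a b) s)\<^sup>*" "v < s + farity a"
  shows "w < s + farity a"
proof -
  have "blue_arcs (Node GR a b) s `` {..<s + farity a} \<subseteq> {..<s + farity a}"
    using blue_arcs_bounds [of _ _ a s] blue_arcs_bounds [of _ _ b "s + farity a"] by fastforce
  then have "(blue_arcs (Node GR a b) s)\<^sup>* `` {..<s + farity a} = {..<s + farity a}"
    by (rule Image_closed_trancl)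
  with assms show ?thesis by blast
qed

lemma right_normal_GP_GR_blue_arcs_neq:
  assumes "right_normal (Node GP a b)" "farity (Node GP a b) = farity (Node GR a' b')"
  shows "blue_arcs (Node GP a b) s \<noteq> blue_arcs (Node GR a' b') s"
proof
  assume eq: "blue_arcs (Node GP a b) s = blue_arcs (Node GR a' b') s"
  have "(s, s + farity (Node GP a b) - 1) \<in> (blue_arcs (Node GP a b) s)\<^sup>*"
    using right_normal_connects_ends [OF assms(1)] by simp
  then have "(s, s + farity (Node GP a b) - 1) \<in> (blue_arcs (Node GR a' b') s)\<^sup>*"
    by (simp only: eq)
  then have "s + farity (Node GP a b) - 1 < s + farity a'"
    using blue_arcs_GR_no_crossing farity_ge_1 [of a'] by simp
  then show False
    using assms(2) farity_ge_1 [of b'] by simp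
qed

lemma right_normal_GR_split_le:
  assumes "right_normal (Node GR a b)" "blue_arcs (Node GR a b) s = blue_arcs (Node GR a' b') s"
    "farity (Node GR a b) = farity (Node GR a' b')"
  shows "farity a' \<le> farity a"
proof (rule ccontr)
  assume less: "\<not> farity a' \<le> farity a"
  have "(s + farity a, s + farity a + farity b - 1) \<in> (blue_arcs b (s + farity a))\<^sup>*"
    using right_normal_connects_ends assms(1) by simp
  moreover have "blue_arcs b (s + farity a) \<subseteq> blue_arcs (Node GR a' b') s"
    using assms(2) by auto
  ultimately have "(s + farity a, s + farity a + farity b - 1) \<in> (blue_arcs (Node GR a' b') s)\<^sup>*"
    using rtrancl_mono by blast
  then have "s + farity a + farity b - 1 < s + farity a'"
    using blue_arcs_GR_no_crossing less by simp
  then show False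
    using assms(3) farity_ge_1 [of b'] by simp
qed

lemma right_normal_blue_arcs_root_eq:
  assumes "right_normal (Node g a b)" "right_normal (Node g' a' b')"
    "farity (Node g a b) = farity (Node g' a' b')" "blue_arcs (Node g a b) s = blue_arcs (Node g' a' b') s"
  shows "g = g'"
  using right_normal_GP_GR_blue_arcs_neq [of a b a' b' s] right_normal_GP_GR_blue_arcs_neq [of a' b' a b s]
    assms by (cases g; cases g') auto

lemma right_normal_blue_arcs_inj:
  "right_normal t \<Longrightarrow> right_normal t' \<Longrightarrow> farity t = farity t' \<Longrightarrow> blue_arcs t s = blue_arcs t' s
    \<Longrightarrow> t = t'"
proof (induction t arbitrary: t' s)
  case Leaf
  then show ?case
  proof (cases t')
    case (Node g' a' b')
    then show ?thesis using Leaf farity_ge_1 [of a'] farity_ge_1 [of b'] by simp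
  qed simp
next
  case (Node g a b)
  then obtain g' a' b' where t': "t' = Node g' a' b'"
    using farity_ge_1 [of a] farity_ge_1 [of b] by (cases t') auto
  have root: "g = g'"
    using right_normal_blue_arcs_root_eq Node.prems unfolding t' by blast
  have split: "farity a = farity a'"
  proof (cases g)
    case GP
    with Node.prems(4) have "blue_arcs (Node GP a b) s = blue_arcs (Node GP a' b') s"
      unfolding t' root by simp
    then have "(s, s + farity a) \<in> blue_arcs (Node GP a' b') s"
      and "(s, s + farity a') \<in> blue_arcs (Node GP a b) s"
      by (metis blue_arcs.simps(2) insertI1)+
    then show ?thesis
      using blue_arcs_Node_first_vertex [of s _ GP] by (metis add_le_cancel_left le_antisym)
  next
    case GR
    then show ?thesis
      using right_normal_GR_split_le [of a b s a' b'] right_normal_GR_split_le [of a' b' s a b]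
        Node.prems unfolding t' root by fastforce
  qed
  have "blue_arcs a s = blue_arcs a' s"
    using blue_arcs_Node_left [of a s g b] blue_arcs_Node_left [of a' s g' b'] Node.prems split
    unfolding t' by simp
  then have "a = a'"
    using Node.IH(1) Node.prems split unfolding t' by simp
  have "blue_arcs b (s + farity a) = blue_arcs b' (s + farity a)"
    using blue_arcs_Node_right [of b s a g] blue_arcs_Node_right [of b' s a' g'] Node.prems split
    unfolding t' by simp
  then have "b = b'"
    using Node.IH(2) Node.prems split unfolding t' by simp
  show ?case
    using root \<open>a = a'\<close> \<open>b = b'\<close> t' by simp
qed

lemma config_eq_iff: "config t = config t' \<longleftrightarrow> farity t = farity t' \<and> blue_arcs t 1 = blue_arcs t' 1"
proof
  assume eq: "config t = config t'"
  then have arity: "farity t = farity t'" by (simp add: config_def)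
  have "(1, farity t + 1) \<notin> blue_arcs t 1" "(1, farity t + 1) \<notin> blue_arcs t' 1"
    using blue_arcs_bounds [of 1 "farity t + 1" t 1] blue_arcs_bounds [of 1 "farity t + 1" t' 1] arity
    by auto
  moreover have "insert (1, farity t + 1) (blue_arcs t 1) = insert (1, farity t + 1) (blue_arcs t' 1)"
    using eq arity by (simp add: config_def)
  ultimately show "farity t = farity t' \<and> blue_arcs t 1 = blue_arcs t' 1"
    using arity by (metis insert_ident)
qed (simp add: config_def)

lemma config_inj_right_normal:
  "right_normal t \<Longrightarrow> right_normal t' \<Longrightarrow> config t = config t' \<Longrightarrow> t = t'"
  using right_normal_blue_arcs_inj by (auto simp: config_eq_iff)

theorem theorem3p24:
  shows "range feval = suboperad_gen {T_bbu, T_ubu}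
         \<and> (\<forall>t t'. feval t = feval t' \<longleftrightarrow> fcong t t')"
proof (intro conjI allI iffI)
  show "range feval = suboperad_gen {T_bbu, T_ubu}"
    by (rule range_feval)
next
  fix t t'
  assume "fcong t t'"
  then show "feval t = feval t'"
    by (simp add: feval_eq_config fcong_imp_config_eq)
next
  fix t t'
  assume "feval t = feval t'"
  then have "config (normalize t) = config (normalize t')"
    using fcong_imp_config_eq [OF fcong_normalize] by (metis feval_eq_config)
  then have "normalize t = normalize t'"
    by (intro config_inj_right_normal right_normal_normalize)
  then show "fcong t t'"
    using fcong_normalize by (metis fcong.sym fcong.trans)
qed

end
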